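(* Assume (A1)–(A4) and $\eta_x,\eta_z>0$ (see context). Then the iterates of the Jacobi scheme satisfy, for all $k\ge1$, $$\Phi^{k-1}\ge\Phi^k\ge\hat\Phi.$$
   Context: Let $T\ge1$, $[T]=\{1,\dots,T\}$; for $t\in[T]$: $X_t\subseteq\mathbb{R}^{n_t}$, $f_t:\mathbb{R}^{n_t}\to\mathbb{R}$, $A_t\in\mathbb{R}^{m\times n_t}$; $b\in\mathbb{R}^m$; $X=\prod_tX_t$, $A=[A_1\cdots A_T]$, $Ax=\sum_tA_tx_t$, $A_{\neq t}x_{\neq t}=\sum_{s\neq t}A_sx_s$; $\|w\|_M=\sqrt{w^\top Mw}$. Assumptions: (A1) $X_t$ nonempty compact; (A2) $f_t$ is $C^2$; (A3) $A$ full row rank; (A4) $\{x\in X:Ax=b\}\neq\emptyset$. Parameters $\rho,\theta,\tau_x,\tau_z>0$ with $\eta_x:=\frac{\tau_x}{4}-\frac{(T-1)\rho}{2}>0$, $\eta_z:=\frac{\tau_z}{4}-\frac{2(\theta+\tau_z)^2}{\rho}>0$. $\mathcal{L}(x,z,\lambda)=\sum_tf_t(x_t)+\frac{\theta}{2}\|z\|^2+\lambda^\top(Ax+z-b)+\frac{\rho}{2}\|Ax+z-b\|^2$. Jacobi scheme: given $x^0\in X$, $z^0,\lambda^0\in\mathbb{R}^m$, for $k\ge1$: (i) for each $t$, $x_t^k$ is a local minimizer, computed by a solver warm-started at $x_t^{k-1}$ (so that its subproblem objective does not exceed that of $x_t^{k-1}$), of $\min_{x_t\in X_t}f_t(x_t)+(\lambda^{k-1})^\top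 A_tx_t+\frac{\rho}{2}\|A_tx_t+A_{\neq t}x^{k-1}_{\neq t}+z^{k-1}-b\|^2+\frac{\tau_x}{2}\|x_t-x_t^{k-1}\|^2_{A_t^\top A_t}$; (ii) $z^k=(\tau_zz^{k-1}-\rho(Ax^k-b)-\lambda^{k-1})/(\tau_z+\rho+\theta)$; (iii) $\lambda^k=\lambda^{k-1}+\rho(Ax^k+z^k-b)$. $\Phi(x,z,\lambda,\hat x,\hat z)=\mathcal{L}(x,z,\lambda)+\frac{\tau_z}{4}\|z-\hat z\|^2+\sum_t\frac{\tau_x}{4}\|x_t-\hat x_t\|^2_{A_t^\top A_t}$; $\Phi^k=\Phi(x^k,z^k,\lambda^k,x^{k-1},z^{k-1})$ for $k\ge1$; $\Delta z^0=-\tau_z^{-1}(\lambda^0+\theta z^0)$, $\Phi^0=\mathcal{L}(x^0,z^0,\lambda^0)+\frac{\tau_z}{4}\|\Delta z^0\|^2$; $\hat\Phi=\min_{x\in X}\sum_tf_t(x_t)$. *)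

theory Defs
  imports "HOL-Analysis.Analysis"
begin

text \<open>A vector of R^d is represented by a function v :: nat \<Rightarrow> real whose
coordinates 0..d-1 are the meaningful ones; the carrier of R^d is the set Rn d of such
functions vanishing at all indices \<ge> d. Vectors of R^m (z, lambda, b) are functions
nat \<Rightarrow> real of which only coordinates < m are ever used. Blocks are indexed by
t \<in> {1..T}. The matrix A_t is A t :: nat \<Rightarrow> nat \<Rightarrow> real, entry (i,j) = A t i j,
i < m, j < n t. Topology on nat \<Rightarrow> real is the product topology, which on Rn d
coincides with the Euclidean topology of R^d.\<close>

definition Rn :: "nat \<Rightarrow> (nat \<Rightarrow> real) set" where
  "Rn d = {v. \<forall>i\<ge>d. v i = 0}"

definition sqn :: "nat \<Rightarrow> (nat \<Rightarrow> real) \<Rightarrow> real" where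
  "sqn d w = (\<Sum>i<d. (w i)^2)"

definition inr :: "nat \<Rightarrow> (nat \<Rightarrow> real) \<Rightarrow> (nat \<Rightarrow> real) \<Rightarrow> real" where
  "inr d u w = (\<Sum>i<d. u i * w i)"

definition mv :: "nat \<Rightarrow> (nat \<Rightarrow> nat \<Rightarrow> real) \<Rightarrow> (nat \<Rightarrow> real) \<Rightarrow> (nat \<Rightarrow> real)" where
  "mv d M v = (\<lambda>i. \<Sum>j<d. M i j * v j)"

definition Ax :: "nat \<Rightarrow> (nat \<Rightarrow> nat) \<Rightarrow> (nat \<Rightarrow> nat \<Rightarrow> nat \<Rightarrow> real) \<Rightarrow> (nat \<Rightarrow> nat \<Rightarrow> real) \<Rightarrow> (nat \<Rightarrow> real)" where
  "Ax T n A x = (\<lambda>i. \<Sum>t\<in>{1..T}. mv (n t) (A t) (x t) i)"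

definition Ax_ne :: "nat \<Rightarrow> (nat \<Rightarrow> nat) \<Rightarrow> (nat \<Rightarrow> nat \<Rightarrow> nat \<Rightarrow> real) \<Rightarrow> nat \<Rightarrow> (nat \<Rightarrow> nat \<Rightarrow> real) \<Rightarrow> (nat \<Rightarrow> real)" where
  "Ax_ne T n A t x = (\<lambda>i. \<Sum>s\<in>{1..T} - {t}. mv (n s) (A s) (x s) i)"

definition C2 :: "nat \<Rightarrow> ((nat \<Rightarrow> real) \<Rightarrow> real) \<Rightarrow> bool" where
  "C2 d f \<longleftrightarrow> (\<exists>g h.
     (\<forall>v\<in>Rn d. \<forall>i<d. ((\<lambda>s. f (v(i := v i + s))) has_real_derivative g i v) (at 0)) \<and>
     (\<forall>v\<in>Rn d. \<forall>i<d. \<forall>j<d. ((\<lambda>s. g i (v(j := v j + s))) has_real_derivative h i j v) (at 0)) \<and>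
     continuous_on (Rn d) f \<and>
     (\<forall>i<d. continuous_on (Rn d) (g i)) \<and>
     (\<forall>i<d. \<forall>j<d. continuous_on (Rn d) (h i j)))"

definition local_min_on :: "nat \<Rightarrow> (nat \<Rightarrow> real) set \<Rightarrow> ((nat \<Rightarrow> real) \<Rightarrow> real) \<Rightarrow> (nat \<Rightarrow> real) \<Rightarrow> bool" where
  "local_min_on d S g v \<longleftrightarrow> v \<in> S \<and>
     (\<exists>e>0. \<forall>y\<in>S. sqrt (sqn d (\<lambda>i. y i - v i)) < e \<longrightarrow> g v \<le> g y)"

definition full_row_rank :: "nat \<Rightarrow> nat \<Rightarrow> (nat \<Rightarrow> nat) \<Rightarrow> (nat \<Rightarrow> nat \<Rightarrow> nat \<Rightarrow> real) \<Rightarrow> bool" where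
  "full_row_rank T m n A \<longleftrightarrow>
     (\<forall>y::nat \<Rightarrow> real. (\<forall>t\<in>{1..T}. \<forall>j<n t. (\<Sum>i<m. y i * A t i j) = 0) \<longrightarrow> (\<forall>i<m. y i = 0))"

definition AL :: "nat \<Rightarrow> nat \<Rightarrow> (nat \<Rightarrow> nat) \<Rightarrow> (nat \<Rightarrow> (nat \<Rightarrow> real) \<Rightarrow> real) \<Rightarrow>
    (nat \<Rightarrow> nat \<Rightarrow> nat \<Rightarrow> real) \<Rightarrow> (nat \<Rightarrow> real) \<Rightarrow> real \<Rightarrow> real \<Rightarrow>
    (nat \<Rightarrow> nat \<Rightarrow> real) \<Rightarrow> (nat \<Rightarrow> real) \<Rightarrow> (nat \<Rightarrow> real) \<Rightarrow> real" where
  "AL T m n f A b rho theta x z lam =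
     (let r = (\<lambda>i. Ax T n A x i + z i - b i) in
      (\<Sum>t\<in>{1..T}. f t (x t)) + theta / 2 * sqn m z + inr m lam r + rho / 2 * sqn m r)"

definition Phi :: "nat \<Rightarrow> nat \<Rightarrow> (nat \<Rightarrow> nat) \<Rightarrow> (nat \<Rightarrow> (nat \<Rightarrow> real) \<Rightarrow> real) \<Rightarrow>
    (nat \<Rightarrow> nat \<Rightarrow> nat \<Rightarrow> real) \<Rightarrow> (nat \<Rightarrow> real) \<Rightarrow> real \<Rightarrow> real \<Rightarrow> real \<Rightarrow> real \<Rightarrow>
    (nat \<Rightarrow> nat \<Rightarrow> real) \<Rightarrow> (nat \<Rightarrow> real) \<Rightarrow> (nat \<Rightarrow> real) \<Rightarrow>
    (nat \<Rightarrow> nat \<Rightarrow> real) \<Rightarrow> (nat \<Rightarrow> real) \<Rightarrow> real" where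
  "Phi T m n f A b rho theta taux tauz x z lam xh zh =
     AL T m n f A b rho theta x z lam + tauz / 4 * sqn m (\<lambda>i. z i - zh i)
     + (\<Sum>t\<in>{1..T}. taux / 4 * sqn m (mv (n t) (A t) (\<lambda>j. x t j - xh t j)))"

definition Phi0 :: "nat \<Rightarrow> nat \<Rightarrow> (nat \<Rightarrow> nat) \<Rightarrow> (nat \<Rightarrow> (nat \<Rightarrow> real) \<Rightarrow> real) \<Rightarrow>
    (nat \<Rightarrow> nat \<Rightarrow> nat \<Rightarrow> real) \<Rightarrow> (nat \<Rightarrow> real) \<Rightarrow> real \<Rightarrow> real \<Rightarrow> real \<Rightarrow>
    (nat \<Rightarrow> nat \<Rightarrow> real) \<Rightarrow> (nat \<Rightarrow> real) \<Rightarrow> (nat \<Rightarrow> real) \<Rightarrow> real" where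
  "Phi0 T m n f A b rho theta tauz x0 z0 lam0 =
     AL T m n f A b rho theta x0 z0 lam0
     + tauz / 4 * sqn m (\<lambda>i. - (lam0 i + theta * z0 i) / tauz)"

definition Phi_seq :: "nat \<Rightarrow> nat \<Rightarrow> (nat \<Rightarrow> nat) \<Rightarrow> (nat \<Rightarrow> (nat \<Rightarrow> real) \<Rightarrow> real) \<Rightarrow>
    (nat \<Rightarrow> nat \<Rightarrow> nat \<Rightarrow> real) \<Rightarrow> (nat \<Rightarrow> real) \<Rightarrow> real \<Rightarrow> real \<Rightarrow> real \<Rightarrow> real \<Rightarrow>
    (nat \<Rightarrow> nat \<Rightarrow> nat \<Rightarrow> real) \<Rightarrow> (nat \<Rightarrow> nat \<Rightarrow> real) \<Rightarrow> (nat \<Rightarrow> nat \<Rightarrow> real) \<Rightarrow> nat \<Rightarrow> real" where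
  "Phi_seq T m n f A b rho theta taux tauz x z lam k =
     (if k = 0 then Phi0 T m n f A b rho theta tauz (x 0) (z 0) (lam 0)
      else Phi T m n f A b rho theta taux tauz (x k) (z k) (lam k) (x (k - 1)) (z (k - 1)))"

text \<open>hat Phi = min_{x \<in> X} sum_t f_t(x_t) (attained by (A1),(A2); written as Inf).\<close>
definition Phi_hat :: "nat \<Rightarrow> (nat \<Rightarrow> (nat \<Rightarrow> real) set) \<Rightarrow> (nat \<Rightarrow> (nat \<Rightarrow> real) \<Rightarrow> real) \<Rightarrow> real" where
  "Phi_hat T X f = Inf {(\<Sum>t\<in>{1..T}. f t (y t)) | y. \<forall>t\<in>{1..T}. y t \<in> X t}"

definition subobj :: "nat \<Rightarrow> nat \<Rightarrow> (nat \<Rightarrow> nat) \<Rightarrow> (nat \<Rightarrow> (nat \<Rightarrow> real) \<Rightarrow> real) \<Rightarrow>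
    (nat \<Rightarrow> nat \<Rightarrow> nat \<Rightarrow> real) \<Rightarrow> (nat \<Rightarrow> real) \<Rightarrow> real \<Rightarrow> real \<Rightarrow>
    (nat \<Rightarrow> nat \<Rightarrow> real) \<Rightarrow> (nat \<Rightarrow> real) \<Rightarrow> (nat \<Rightarrow> real) \<Rightarrow> nat \<Rightarrow> (nat \<Rightarrow> real) \<Rightarrow> real" where
  "subobj T m n f A b rho taux xp zp lp t y =
     f t y + inr m lp (mv (n t) (A t) y)
     + rho / 2 * sqn m (\<lambda>i. mv (n t) (A t) y i + Ax_ne T n A t xp i + zp i - b i)
     + taux / 2 * sqn m (mv (n t) (A t) (\<lambda>j. y j - xp t j))"

end

theory Submission
  imports Defs
begin

text \<open>Phi splits into the objective \<Sum>t f_t(x_t), one quadratic term per coordinate i < m in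
(z_i, \<lambda>_i, r_i, \<Delta>z_i) with r = Ax + z - b, and the proximal x-terms. Optimality of the
z-update gives \<lambda>^k = -\<theta> z^k - \<tau>_z \<Delta>z^k (for k = 0 this is the definition of \<Delta>z^0),
which makes every coordinate term a nonnegative quadratic form as soon as \<rho> \<ge> \<theta> + 2\<tau>_z,
a consequence of \<eta>_z > 0; hence \<Phi>^k \<ge> \<Sum>t f_t(x_t^k) \<ge> hat \<Phi>.
For the descent, each warm-started block step decreases f_t plus the coupling term linearised at
x^{k-1}. The Jacobi error is \<rho>/2 (\<Sum>t A_t \<Delta>x_t)^2 \<le> \<rho> T/2 \<Sum>t (A_t \<Delta>x_t)^2 (Cauchy-Schwarz),
which \<eta>_x > 0 absorbs into the proximal terms; the (z, \<lambda>)-step then decreases each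
coordinate term, because \<eta>_z > 0 lets \<tau>_z/4 |\<Delta>z^{k-1}|^2 pay for \<rho> |r^k|^2.\<close>

definition coord_potential :: "real \<Rightarrow> real \<Rightarrow> real \<Rightarrow> real \<Rightarrow> real \<Rightarrow> real \<Rightarrow> real \<Rightarrow> real" where
  "coord_potential rho theta tauz z l r dz = theta / 2 * z^2 + l * r + rho / 2 * r^2 + tauz / 4 * dz^2"

lemma eta_z_pos_iff:
  fixes rho theta tauz :: real
  assumes "rho > 0"
  shows "tauz / 4 - 2 * (theta + tauz)^2 / rho > 0 \<longleftrightarrow> 8 * (theta + tauz)^2 < tauz * rho"
  using assms by (simp add: field_simps)

lemma rho_ge_of_eta_z:
  fixes rho theta tauz :: real
  assumes "theta \<ge> 0" "tauz > 0" "8 * (theta + tauz)^2 < tauz * rho"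
  shows "theta + 2 * tauz \<le> rho"
proof -
  have "tauz * (theta + tauz) \<le> (theta + tauz) * (theta + tauz)"
    using assms by (intro mult_right_mono) auto
  then have "8 * (tauz * (theta + tauz)) < tauz * rho"
    using assms(3) unfolding power2_eq_square by linarith
  then have "tauz * (8 * (theta + tauz)) < tauz * rho"
    by (metis mult.left_commute)
  then have "8 * (theta + tauz) < rho"
    using assms(2) by simp
  with assms show ?thesis by (simp add: distrib_left)
qed

lemma coord_potential_shift:
  "coord_potential rho theta tauz z l (r + d) dz
    = coord_potential rho theta tauz z l r dz + l * d + rho * r * d + rho / 2 * d^2"
  unfolding coord_potential_def by (simp add: power2_eq_square algebra_simps)

lemma coord_potential_nonneg:
  fixes rho theta tauz z l r dz :: real
  assumes "theta \<ge> 0" "tauz \<ge> 0" "theta + 2 * tauz \<le> rho" and l: "l = - theta * z - tauz * dz"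
  shows "0 \<le> coord_potential rho theta tauz z l r dz"
proof -
  have "coord_potential rho theta tauz z l r dz
      = theta / 2 * (z - r)^2 + tauz * (r - dz / 2)^2 + (rho - theta - 2 * tauz) / 2 * r^2"
    unfolding coord_potential_def l by (simp add: power2_eq_square field_simps)
  also have "\<dots> \<ge> 0" using assms by simp
  finally show ?thesis .
qed

lemma coord_potential_z_update_le:
  fixes rho theta tauz z z' l l' s e :: real
  assumes "rho > 0" "theta \<ge> 0" "tauz \<ge> 0" "8 * (theta + tauz)^2 \<le> tauz * rho"
    and l: "l = - theta * z - tauz * e"
    and z': "(tauz + rho + theta) * z' = tauz * z - rho * s - l" and l': "l' = l + rho * (s + z')"
  shows "coord_potential rho theta tauz z' l' (s + z') (z' - z) \<le> coord_potential rho theta tauz z l (s + z) e"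
proof -
  define dz r where "dz = z' - z" and "r = s + z'"
  have rho_r: "rho * r = tauz * e - (theta + tauz) * dz"
    using l z' unfolding dz_def r_def by (simp add: algebra_simps)
  have diff: "coord_potential rho theta tauz z' l' (s + z') (z' - z) - coord_potential rho theta tauz z l (s + z) e
      = rho * r^2 - tauz / 4 * e^2 - tauz / 4 * dz^2 - (theta + rho + tauz) / 2 * dz^2"
  proof -
    have z'_eq: "z' = z + dz" and s_eq: "s = r - z - dz" by (simp_all add: dz_def r_def)
    have "coord_potential rho theta tauz z' l' (s + z') (z' - z) - coord_potential rho theta tauz z l (s + z) e
      - (rho * r^2 - tauz / 4 * e^2 - tauz / 4 * dz^2 - (theta + rho + tauz) / 2 * dz^2)
      = dz * (rho * r - tauz * e + (theta + tauz) * dz)"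
      unfolding coord_potential_def l' l z'_eq s_eq by (simp add: power2_eq_square field_simps)
    with rho_r show ?thesis by simp
  qed
  have "tauz^2 \<le> (theta + tauz)^2" using assms by (simp add: power_mono)
  then have "8 * tauz^2 \<le> tauz * rho" using assms by linarith
  have "rho * (rho * r^2) = (tauz * e - (theta + tauz) * dz)^2"
    using rho_r by (metis power2_eq_square power_mult_distrib mult.assoc)
  also have "\<dots> \<le> 2 * tauz^2 * e^2 + 2 * (theta + tauz)^2 * dz^2"
    using zero_le_power2[of "tauz * e + (theta + tauz) * dz"]
    by (simp add: power2_eq_square algebra_simps)
  also have "\<dots> \<le> rho * (tauz / 4 * e^2 + tauz / 4 * dz^2)"
    using \<open>8 * tauz^2 \<le> tauz * rho\<close> assms(4)
      mult_right_mono[of "8 * tauz^2" "tauz * rho" "e^2"]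
      mult_right_mono[of "8 * (theta + tauz)^2" "tauz * rho" "dz^2"]
    by (simp add: algebra_simps)
  finally have "rho * r^2 \<le> tauz / 4 * e^2 + tauz / 4 * dz^2"
    using assms(1) by (simp add: mult_le_cancel_left_pos)
  moreover have "0 \<le> (theta + rho + tauz) / 2 * dz^2" using assms by simp
  ultimately show ?thesis using diff by linarith
qed

lemma sum_square_coupling_le:
  fixes d :: "'a \<Rightarrow> real"
  assumes "rho \<ge> 0" "(real (card I) - 1) * rho / 2 \<le> tau / 4"
  shows "rho / 2 * (\<Sum>i\<in>I. d i)^2 + tau / 4 * (\<Sum>i\<in>I. (d i)^2) \<le> (rho + tau) / 2 * (\<Sum>i\<in>I. (d i)^2)"
proof -
  define S where "S = (\<Sum>i\<in>I. (d i)^2)"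
  have "S \<ge> 0" unfolding S_def by (simp add: sum_nonneg)
  have "rho / 2 * (\<Sum>i\<in>I. d i)^2 \<le> rho / 2 * (S * card I)"
    unfolding S_def using assms(1) by (intro mult_left_mono sum_squared_le_sum_of_squares) auto
  also have "\<dots> = (rho / 2 + (real (card I) - 1) * rho / 2) * S" by (simp add: field_simps)
  also have "\<dots> \<le> (rho / 2 + tau / 4) * S" using assms(2) \<open>S \<ge> 0\<close> by (simp add: mult_right_mono)
  finally show ?thesis unfolding S_def by (simp add: field_simps)
qed

lemma mv_diff: "mv d M (\<lambda>j. u j - v j) i = mv d M u i - mv d M v i"
  unfolding mv_def by (simp add: right_diff_distrib sum_subtractf)

lemma Ax_diff:
  "Ax T n A x' i = Ax T n A x i + (\<Sum>t\<in>{1..T}. mv (n t) (A t) (\<lambda>j. x' t j - x t j) i)"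
  unfolding Ax_def by (simp add: mv_diff sum_subtractf)

lemma Ax_ne_eq: "t \<in> {1..T} \<Longrightarrow> Ax_ne T n A t x i = Ax T n A x i - mv (n t) (A t) (x t) i"
  unfolding Ax_ne_def Ax_def by (simp add: sum_diff1)

lemma subobj_diff:
  fixes T m :: nat and n :: "nat \<Rightarrow> nat" and A :: "nat \<Rightarrow> nat \<Rightarrow> nat \<Rightarrow> real"
    and xp :: "nat \<Rightarrow> nat \<Rightarrow> real" and y zp b :: "nat \<Rightarrow> real"
  assumes t: "t \<in> {1..T}"
  defines "d \<equiv> mv (n t) (A t) (\<lambda>j. y j - xp t j)" and "w \<equiv> \<lambda>i. Ax T n A xp i + zp i - b i"
  shows "subobj T m n f A b rho taux xp zp lp t y
      = subobj T m n f A b rho taux xp zp lp t (xp t) + f t y - f t (xp t)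
        + (\<Sum>i<m. lp i * d i + rho * w i * d i + (rho + taux) / 2 * (d i)^2)"
proof -
  have A_y: "mv (n t) (A t) y i = mv (n t) (A t) (xp t) i + d i" for i
    unfolding d_def mv_diff by simp
  have res: "mv (n t) (A t) (xp t) i + Ax_ne T n A t xp i + zp i - b i = w i" for i
    unfolding w_def Ax_ne_eq[OF t] by simp
  have "subobj T m n f A b rho taux xp zp lp t y - subobj T m n f A b rho taux xp zp lp t (xp t)
      = f t y - f t (xp t) + (\<Sum>i<m. lp i * d i + rho / 2 * ((w i + d i)^2 - (w i)^2) + taux / 2 * (d i)^2)"
    unfolding subobj_def inr_def sqn_def A_y d_def[symmetric]
    by (simp add: res[symmetric] mv_def sum.distrib sum_subtractf sum_distrib_left algebra_simps)
  also have "\<dots> = f t y - f t (xp t) + (\<Sum>i<m. lp i * d i + rho * w i * d i + (rho + taux) / 2 * (d i)^2)"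
    by (simp add: power2_eq_square field_simps)
  finally show ?thesis by simp
qed

lemma Phi_eq:
  "Phi T m n f A b rho theta taux tauz x z l xh zh = (\<Sum>t\<in>{1..T}. f t (x t))
    + (\<Sum>i<m. coord_potential rho theta tauz (z i) (l i) (Ax T n A x i + z i - b i) (z i - zh i))
    + (\<Sum>t\<in>{1..T}. taux / 4 * sqn m (mv (n t) (A t) (\<lambda>j. x t j - xh t j)))"
  unfolding Phi_def AL_def Let_def sqn_def inr_def coord_potential_def
  by (simp add: sum.distrib sum_distrib_left)

lemma Phi0_eq:
  "Phi0 T m n f A b rho theta tauz x z l = (\<Sum>t\<in>{1..T}. f t (x t))
    + (\<Sum>i<m. coord_potential rho theta tauz (z i) (l i) (Ax T n A x i + z i - b i)
                 (- (l i + theta * z i) / tauz))"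
  unfolding Phi0_def AL_def Let_def sqn_def inr_def coord_potential_def
  by (simp add: sum.distrib sum_distrib_left)

lemma Phi_hat_le_sum:
  assumes "\<And>t. t \<in> {1..T} \<Longrightarrow> compact (X t)" "\<And>t. t \<in> {1..T} \<Longrightarrow> continuous_on (X t) (f t)"
    and "\<And>t. t \<in> {1..T} \<Longrightarrow> y t \<in> X t"
  shows "Phi_hat T X f \<le> (\<Sum>t\<in>{1..T}. f t (y t))"
proof -
  have "\<exists>B. \<forall>v\<in>X t. B \<le> f t v" if "t \<in> {1..T}" for t
  proof -
    have "bdd_below (f t ` X t)"
      using assms that by (intro bounded_imp_bdd_below compact_imp_bounded compact_continuous_image)
    then show ?thesis by (auto simp: bdd_below_def)
  qed
  then obtain B where B: "\<And>t v. t \<in> {1..T} \<Longrightarrow> v \<in> X t \<Longrightarrow> B t \<le> f t v" by metis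
  have "bdd_below {(\<Sum>t\<in>{1..T}. f t (y t)) | y. \<forall>t\<in>{1..T}. y t \<in> X t}"
    by (rule bdd_belowI[of _ "\<Sum>t\<in>{1..T}. B t"]) (auto intro!: sum_mono B)
  then show ?thesis
    unfolding Phi_hat_def by (rule cInf_lower[rotated]) (use assms(3) in blast)
qed

locale jacobi_scheme =
  fixes T m :: nat and n :: "nat \<Rightarrow> nat" and X :: "nat \<Rightarrow> (nat \<Rightarrow> real) set"
    and f :: "nat \<Rightarrow> (nat \<Rightarrow> real) \<Rightarrow> real" and A :: "nat \<Rightarrow> nat \<Rightarrow> nat \<Rightarrow> real"
    and b :: "nat \<Rightarrow> real" and rho theta taux tauz :: real
    and x :: "nat \<Rightarrow> nat \<Rightarrow> nat \<Rightarrow> real" and z lam :: "nat \<Rightarrow> nat \<Rightarrow> real"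
  assumes rho_pos: "rho > 0" and theta_pos: "theta > 0" and taux_pos: "taux > 0" and tauz_pos: "tauz > 0"
    and eta_x: "taux / 4 - (real T - 1) * rho / 2 > 0"
    and eta_z: "tauz / 4 - 2 * (theta + tauz)^2 / rho > 0"
    and compact_X: "t \<in> {1..T} \<Longrightarrow> compact (X t)"
    and continuous_f: "t \<in> {1..T} \<Longrightarrow> continuous_on (X t) (f t)"
    and x_in_X: "t \<in> {1..T} \<Longrightarrow> x j t \<in> X t"
    and x_update: "t \<in> {1..T} \<Longrightarrow>
      subobj T m n f A b rho taux (x j) (z j) (lam j) t (x (Suc j) t)
        \<le> subobj T m n f A b rho taux (x j) (z j) (lam j) t (x j t)"
    and z_update: "i < m \<Longrightarrow>
      (tauz + rho + theta) * z (Suc j) i = tauz * z j i - rho * (Ax T n A (x (Suc j)) i - b i) - lam j i"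
    and lam_update: "i < m \<Longrightarrow>
      lam (Suc j) i = lam j i + rho * (Ax T n A (x (Suc j)) i + z (Suc j) i - b i)"
begin

abbreviation potential :: "nat \<Rightarrow> real" where
  "potential \<equiv> Phi_seq T m n f A b rho theta taux tauz x z lam"

abbreviation objective :: "nat \<Rightarrow> real" where
  "objective j \<equiv> \<Sum>t\<in>{1..T}. f t (x j t)"

abbreviation residual :: "nat \<Rightarrow> nat \<Rightarrow> real" where
  "residual j i \<equiv> Ax T n A (x j) i + z j i - b i"

abbreviation step_image :: "nat \<Rightarrow> nat \<Rightarrow> nat \<Rightarrow> real" where
  "step_image j t \<equiv> mv (n t) (A t) (\<lambda>l. x (Suc j) t l - x j t l)"

lemma eta_z_cleared: "8 * (theta + tauz)^2 < tauz * rho"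
  using eta_z eta_z_pos_iff[OF rho_pos] by simp

lemma rho_ge: "theta + 2 * tauz \<le> rho"
  using rho_ge_of_eta_z theta_pos tauz_pos eta_z_cleared by simp

lemma lam_Suc_eq: "i < m \<Longrightarrow> lam (Suc j) i = - theta * z (Suc j) i - tauz * (z (Suc j) i - z j i)"
  using z_update[of i j] lam_update[of i j] by (simp add: algebra_simps)

lemma potential_eq:
  obtains e P
  where "potential j = objective j
      + (\<Sum>i<m. coord_potential rho theta tauz (z j i) (lam j i) (residual j i) (e i)) + P"
    and "0 \<le> P" and "\<And>i. i < m \<Longrightarrow> lam j i = - theta * z j i - tauz * e i"
proof (cases j)
  case 0
  show ?thesis
    by (rule that[of "\<lambda>i. - (lam j i + theta * z j i) / tauz" 0])
      (use 0 tauz_pos in \<open>simp_all add: Phi_seq_def Phi0_eq\<close>)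
next
  case (Suc p)
  show ?thesis
  proof (rule that[of "\<lambda>i. z j i - z p i" "\<Sum>t\<in>{1..T}. taux / 4 * sqn m (step_image p t)"])
    show "0 \<le> (\<Sum>t\<in>{1..T}. taux / 4 * sqn m (step_image p t))"
      using taux_pos by (simp add: sqn_def sum_nonneg)
  qed (use Suc lam_Suc_eq in \<open>simp_all add: Phi_seq_def Phi_eq\<close>)
qed

lemma objective_le_potential: "objective j \<le> potential j"
proof -
  obtain e P where pot: "potential j = objective j
      + (\<Sum>i<m. coord_potential rho theta tauz (z j i) (lam j i) (residual j i) (e i)) + P"
    and "0 \<le> P" and lam: "\<And>i. i < m \<Longrightarrow> lam j i = - theta * z j i - tauz * e i"
    using potential_eq[of j] by blast
  have "0 \<le> (\<Sum>i<m. coord_potential rho theta tauz (z j i) (lam j i) (residual j i) (e i))"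
    using theta_pos tauz_pos rho_ge lam by (intro sum_nonneg coord_potential_nonneg) auto
  with pot \<open>0 \<le> P\<close> show ?thesis by linarith
qed

lemma Phi_hat_le_potential: "Phi_hat T X f \<le> potential j"
  using Phi_hat_le_sum[OF compact_X continuous_f x_in_X] objective_le_potential by (rule order_trans)

lemma objective_Suc_le:
  "objective (Suc j) + (\<Sum>i<m. \<Sum>t\<in>{1..T}. lam j i * step_image j t i
      + rho * residual j i * step_image j t i + (rho + taux) / 2 * (step_image j t i)^2)
    \<le> objective j"
proof -
  have "f t (x (Suc j) t) + (\<Sum>i<m. lam j i * step_image j t i
      + rho * residual j i * step_image j t i + (rho + taux) / 2 * (step_image j t i)^2)
    \<le> f t (x j t)" if "t \<in> {1..T}" for t
    using x_update[OF that, of j] subobj_diff[OF that, where m = m and n = n and A = A and f = f and b = b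
        and rho = rho and taux = taux and xp = "x j" and zp = "z j" and lp = "lam j" and y = "x (Suc j) t"]
    by linarith
  then have "(\<Sum>t\<in>{1..T}. f t (x (Suc j) t) + (\<Sum>i<m. lam j i * step_image j t i
      + rho * residual j i * step_image j t i + (rho + taux) / 2 * (step_image j t i)^2))
    \<le> objective j"
    by (rule sum_mono)
  then show ?thesis by (simp add: sum.distrib sum.swap[of _ "{..<m}"])
qed

lemma potential_Suc_le: "potential (Suc j) \<le> potential j"
proof -
  obtain e P where pot_j: "potential j = objective j
      + (\<Sum>i<m. coord_potential rho theta tauz (z j i) (lam j i) (residual j i) (e i)) + P"
    and "0 \<le> P" and lam_j: "\<And>i. i < m \<Longrightarrow> lam j i = - theta * z j i - tauz * e i"
    using potential_eq[of j] by blast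
  define D where "D i = (\<Sum>t\<in>{1..T}. step_image j t i)" for i
  define S where "S i = (\<Sum>t\<in>{1..T}. (step_image j t i)^2)" for i
  let ?new = "\<lambda>i. coord_potential rho theta tauz (z (Suc j) i) (lam (Suc j) i) (residual (Suc j) i)
      (z (Suc j) i - z j i)"
  let ?mid = "\<lambda>i. coord_potential rho theta tauz (z j i) (lam j i) (residual j i + D i) (e i)"
  let ?old = "\<lambda>i. coord_potential rho theta tauz (z j i) (lam j i) (residual j i) (e i)"
  let ?G = "\<lambda>i. lam j i * D i + rho * residual j i * D i + (rho + taux) / 2 * S i"
  have pot_Suc: "potential (Suc j) = objective (Suc j) + (\<Sum>i<m. ?new i + taux / 4 * S i)"
  proof -
    have "(\<Sum>t\<in>{1..T}. taux / 4 * sqn m (step_image j t)) = (\<Sum>i<m. taux / 4 * S i)"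
      unfolding sqn_def S_def sum_distrib_left by (rule sum.swap)
    then show ?thesis by (simp add: Phi_seq_def Phi_eq sum.distrib)
  qed
  have z_descent: "?new i \<le> ?mid i" if "i < m" for i
  proof -
    define s where "s = Ax T n A (x (Suc j)) i - b i"
    have res_new: "residual (Suc j) i = s + z (Suc j) i" and res_mid: "residual j i + D i = s + z j i"
      unfolding s_def D_def using Ax_diff[of T n A "x (Suc j)" i "x j"] by simp_all
    have z_new: "(tauz + rho + theta) * z (Suc j) i = tauz * z j i - rho * s - lam j i"
      and lam_new: "lam (Suc j) i = lam j i + rho * (s + z (Suc j) i)"
      unfolding s_def using z_update[OF that] lam_update[OF that] by simp_all
    show ?thesis
      unfolding res_new res_mid
      by (rule coord_potential_z_update_le[OF rho_pos _ _ _ lam_j[OF that] z_new lam_new])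
        (use theta_pos tauz_pos eta_z_cleared in auto)
  qed
  have x_descent: "?mid i + taux / 4 * S i \<le> ?old i + ?G i" for i
  proof -
    have "rho / 2 * (D i)^2 + taux / 4 * S i \<le> (rho + taux) / 2 * S i"
      unfolding D_def S_def using rho_pos eta_x by (intro sum_square_coupling_le) auto
    then show ?thesis unfolding coord_potential_shift by linarith
  qed
  have "?new i + taux / 4 * S i \<le> ?old i + ?G i" if "i < m" for i
    using z_descent[OF that] x_descent[of i] by linarith
  then have "potential (Suc j) \<le> objective (Suc j) + (\<Sum>i<m. ?old i + ?G i)"
    unfolding pot_Suc by (intro add_left_mono sum_mono) auto
  also have "\<dots> = objective (Suc j) + (\<Sum>i<m. \<Sum>t\<in>{1..T}. lam j i * step_image j t i
      + rho * residual j i * step_image j t i + (rho + taux) / 2 * (step_image j t i)^2) + (\<Sum>i<m. ?old i)"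
    unfolding D_def S_def by (simp add: sum.distrib sum_distrib_left)
  also have "\<dots> \<le> objective j + (\<Sum>i<m. ?old i)"
    using objective_Suc_le[of j] by linarith
  also have "\<dots> \<le> potential j"
    using pot_j \<open>0 \<le> P\<close> by linarith
  finally show ?thesis .
qed

end

theorem lemma3:
  fixes T m :: nat and n :: "nat \<Rightarrow> nat"
    and X :: "nat \<Rightarrow> (nat \<Rightarrow> real) set"
    and f :: "nat \<Rightarrow> (nat \<Rightarrow> real) \<Rightarrow> real"
    and A :: "nat \<Rightarrow> nat \<Rightarrow> nat \<Rightarrow> real"
    and b :: "nat \<Rightarrow> real"
    and rho theta taux tauz :: real
    and x :: "nat \<Rightarrow> nat \<Rightarrow> nat \<Rightarrow> real"
    and z lam :: "nat \<Rightarrow> nat \<Rightarrow> real"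
    and k :: nat
  assumes T_pos: "1 \<le> T"
    and A1: "\<forall>t\<in>{1..T}. X t \<subseteq> Rn (n t) \<and> X t \<noteq> {} \<and> compact (X t)"
    and A2: "\<forall>t\<in>{1..T}. C2 (n t) (f t)"
    and A3: "full_row_rank T m n A"
    and A4: "\<exists>y. (\<forall>t\<in>{1..T}. y t \<in> X t) \<and> (\<forall>i<m. Ax T n A y i = b i)"
    and params: "rho > 0" "theta > 0" "taux > 0" "tauz > 0"
    and eta_x: "taux / 4 - (real T - 1) * rho / 2 > 0"
    and eta_z: "tauz / 4 - 2 * (theta + tauz)^2 / rho > 0"
    and x0: "\<forall>t\<in>{1..T}. x 0 t \<in> X t"
    and x_step: "\<forall>j\<ge>1. \<forall>t\<in>{1..T}.
        local_min_on (n t) (X t) (subobj T m n f A b rho taux (x (j - 1)) (z (j - 1)) (lam (j - 1)) t) (x j t)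
        \<and> subobj T m n f A b rho taux (x (j - 1)) (z (j - 1)) (lam (j - 1)) t (x j t)
          \<le> subobj T m n f A b rho taux (x (j - 1)) (z (j - 1)) (lam (j - 1)) t (x (j - 1) t)"
    and z_step: "\<forall>j\<ge>1. \<forall>i<m. z j i =
        (tauz * z (j - 1) i - rho * (Ax T n A (x j) i - b i) - lam (j - 1) i) / (tauz + rho + theta)"
    and lam_step: "\<forall>j\<ge>1. \<forall>i<m. lam j i = lam (j - 1) i + rho * (Ax T n A (x j) i + z j i - b i)"
    and k_pos: "1 \<le> k"
  shows "Phi_seq T m n f A b rho theta taux tauz x z lam (k - 1) \<ge> Phi_seq T m n f A b rho theta taux tauz x z lam k
       \<and> Phi_seq T m n f A b rho theta taux tauz x z lam k \<ge> Phi_hat T X f"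
proof -
  have x_in_X: "x j t \<in> X t" if "t \<in> {1..T}" for j t
    using that x0 x_step[rule_format, of j t] unfolding local_min_on_def by (cases j) auto
  have x_update: "subobj T m n f A b rho taux (x j) (z j) (lam j) t (x (Suc j) t)
      \<le> subobj T m n f A b rho taux (x j) (z j) (lam j) t (x j t)" if "t \<in> {1..T}" for j t
    using x_step[rule_format, of "Suc j" t] that by simp
  have compact_X: "compact (X t)" if "t \<in> {1..T}" for t
    using A1 that by blast
  have continuous_f: "continuous_on (X t) (f t)" if "t \<in> {1..T}" for t
    using A1 A2 that unfolding C2_def by (meson continuous_on_subset)
  have z_update: "(tauz + rho + theta) * z (Suc j) i
      = tauz * z j i - rho * (Ax T n A (x (Suc j)) i - b i) - lam j i" if "i < m" for i j
    using z_step[rule_format, of "Suc j" i] that params by (simp add: field_simps)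
  have lam_update: "lam (Suc j) i = lam j i + rho * (Ax T n A (x (Suc j)) i + z (Suc j) i - b i)"
    if "i < m" for i j
    using lam_step[rule_format, of "Suc j" i] that by simp
  interpret jacobi_scheme T m n X f A b rho theta taux tauz x z lam
    using params eta_x eta_z compact_X continuous_f x_in_X x_update z_update lam_update
    by (rule jacobi_scheme.intro)
  obtain p where "k = Suc p" using k_pos by (cases k) auto
  then show ?thesis using potential_Suc_le[of p] Phi_hat_le_potential[of k] by simp
qed

end
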